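(* Let $n\ge 1$ be an integer and $R=\mathbb{Z}_2\times\cdots\times\mathbb{Z}_2$ ($n$ factors). Then $\Gamma'(R)$ is perfect; equivalently, neither $\Gamma'(R)$ nor its complement $\overline{\Gamma'(R)}$ contains an induced cycle of odd length at least $5$.
   Context: All rings are commutative with identity. $W^*(R)$ denotes the set of non-zero non-unit elements of $R$. The cozero-divisor graph $\Gamma'(R)$ is the simple graph with vertex set $W^*(R)$, in which distinct $a,b$ are adjacent iff $a\notin Rb$ and $b\notin Ra$. A graph $G$ is perfect if every induced subgraph $H$ satisfies $\omega(H)=\chi(H)$ (clique number equals chromatic number). *)

theory Defs
  imports Main "HOL-Library.Function_Algebras" "HOL-Library.Z2"
begin

text \<open>The ring Z_2 x ... x Z_2 (n factors) is modelled as the type 'n => bit for a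
finite index type 'n with CARD('n) = n (pointwise ring operations from Function_Algebras,
bit = Z_2 from HOL-Library.Z2).\<close>

definition W_star :: "'a::comm_ring_1 set" where
  "W_star = {a. a \<noteq> 0 \<and> \<not> (a dvd 1)}"

definition principal_ideal :: "'a::comm_ring_1 \<Rightarrow> 'a set" where
  "principal_ideal b = {r * b | r. True}"

definition cozero_adj :: "'a::comm_ring_1 \<Rightarrow> 'a \<Rightarrow> bool" where
  "cozero_adj a b \<longleftrightarrow> a \<in> W_star \<and> b \<in> W_star \<and> a \<noteq> b \<and>
     a \<notin> principal_ideal b \<and> b \<notin> principal_ideal a"

text \<open>Simple graphs given by a vertex set V and a symmetric irreflexive relation E.
Induced subgraph on H is (H, E restricted to H).\<close>
definition is_clique :: "('v \<Rightarrow> 'v \<Rightarrow> bool) \<Rightarrow> 'v set \<Rightarrow> bool" where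
  "is_clique E K \<longleftrightarrow> (\<forall>x\<in>K. \<forall>y\<in>K. x \<noteq> y \<longrightarrow> E x y)"

definition clique_number :: "'v set \<Rightarrow> ('v \<Rightarrow> 'v \<Rightarrow> bool) \<Rightarrow> nat" where
  "clique_number V E = Max {card K | K. K \<subseteq> V \<and> is_clique E K}"

definition proper_colouring :: "'v set \<Rightarrow> ('v \<Rightarrow> 'v \<Rightarrow> bool) \<Rightarrow> ('v \<Rightarrow> nat) \<Rightarrow> nat \<Rightarrow> bool" where
  "proper_colouring V E c k \<longleftrightarrow> c ` V \<subseteq> {..<k} \<and>
     (\<forall>x\<in>V. \<forall>y\<in>V. E x y \<longrightarrow> c x \<noteq> c y)"

definition chromatic_number :: "'v set \<Rightarrow> ('v \<Rightarrow> 'v \<Rightarrow> bool) \<Rightarrow> nat" where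
  "chromatic_number V E = (LEAST k. \<exists>c. proper_colouring V E c k)"

definition perfect_graph :: "'v set \<Rightarrow> ('v \<Rightarrow> 'v \<Rightarrow> bool) \<Rightarrow> bool" where
  "perfect_graph V E \<longleftrightarrow> (\<forall>H \<subseteq> V. clique_number H E = chromatic_number H E)"

end

theory Submission
  imports Defs
begin

text \<open>An element of \<open>Z\<^sub>2\<^sup>n\<close> is determined by its support, and \<open>a \<in> Rb\<close> holds exactly when
the support of \<open>a\<close> is contained in that of \<open>b\<close>. Hence \<open>\<Gamma>'(R)\<close> is isomorphic to the
incomparability graph of a finite family of subsets of \<open>{1..n}\<close>. Incomparability graphs of
finite posets are perfect: induced subgraphs are again incomparability graphs, cliques are
antichains and colour classes of proper colourings are chains, so the equality of clique and
chromatic number is Dilworth's theorem.\<close>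

section \<open>Cliques and colourings\<close>

lemma card_clique_le_colours:
  assumes "K \<subseteq> V" "is_clique E K" "proper_colouring V E c m"
  shows "card K \<le> m"
proof -
  have "inj_on c K"
    using assms unfolding proper_colouring_def is_clique_def inj_on_def by blast
  hence "card K = card (c ` K)" by (simp add: card_image)
  also have "\<dots> \<le> card {..<m}"
    using assms unfolding proper_colouring_def by (intro card_mono) auto
  finally show ?thesis by simp
qed

lemma clique_meets_every_colour:
  assumes "K \<subseteq> V" "is_clique E K" "proper_colouring V E c k" "card K = k" "i < k"
  shows "\<exists>y\<in>K. c y = i"
proof -
  have "inj_on c K"
    using assms unfolding proper_colouring_def is_clique_def inj_on_def by blast
  hence "card (c ` K) = card {..<k}" using assms(4) by (simp add: card_image)
  moreover have "c ` K \<subseteq> {..<k}" using assms(1,3) unfolding proper_colouring_def by blast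
  ultimately have "c ` K = {..<k}" by (simp add: card_subset_eq)
  thus ?thesis using assms(5) by (metis imageE lessThan_iff)
qed

lemma proper_colouring_extend_independent:
  assumes "proper_colouring V E c m" "\<forall>p\<in>K. \<forall>q\<in>K. \<not> E p q"
  shows "proper_colouring (V \<union> K) E (\<lambda>z. if z \<in> K then m else c z) (Suc m)"
proof -
  have "c x < m" if "x \<in> V" for x using assms(1) that unfolding proper_colouring_def by blast
  thus ?thesis using assms unfolding proper_colouring_def by (auto simp: image_subset_iff less_SucI)
qed

lemma clique_number_ge:
  assumes "finite V" "K \<subseteq> V" "is_clique E K"
  shows "card K \<le> clique_number V E"
proof -
  have "finite {card K | K. K \<subseteq> V \<and> is_clique E K}"
    using assms(1) by (simp add: finite_image_set2 finite_subset[of _ "Pow V"])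
  thus ?thesis using assms unfolding clique_number_def by (auto intro: Max_ge)
qed

lemma clique_number_attained:
  assumes "finite V"
  obtains K where "K \<subseteq> V" "is_clique E K" "card K = clique_number V E"
proof -
  let ?C = "{card K | K. K \<subseteq> V \<and> is_clique E K}"
  have "finite ?C" using assms by (simp add: finite_image_set2 finite_subset[of _ "Pow V"])
  moreover have "?C \<noteq> {}" unfolding is_clique_def by force
  ultimately have "clique_number V E \<in> ?C" unfolding clique_number_def by (rule Max_in)
  thus ?thesis using that by auto
qed

lemma chromatic_number_eq_clique_number:
  assumes "finite V" "proper_colouring V E c (clique_number V E)"
  shows "chromatic_number V E = clique_number V E"
proof -
  obtain K where "K \<subseteq> V" "is_clique E K" "card K = clique_number V E"
    using clique_number_attained[OF assms(1)] .
  hence "clique_number V E \<le> m" if "proper_colouring V E c' m" for c' m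
    using card_clique_le_colours that by metis
  thus ?thesis unfolding chromatic_number_def using assms(2) by (intro Least_equality) auto
qed

lemma clique_number_image:
  assumes "inj_on f V" "\<forall>x\<in>V. \<forall>y\<in>V. F (f x) (f y) \<longleftrightarrow> E x y"
  shows "clique_number (f ` V) F = clique_number V E"
proof -
  have clique_iff: "is_clique F (f ` K) \<longleftrightarrow> is_clique E K" if "K \<subseteq> V" for K
  proof -
    have "\<forall>x\<in>K. \<forall>y\<in>K. (f x \<noteq> f y \<longleftrightarrow> x \<noteq> y) \<and> (F (f x) (f y) \<longleftrightarrow> E x y)"
      using that assms inj_on_eq_iff[OF assms(1)] by blast
    thus ?thesis unfolding is_clique_def by auto
  qed
  have card_eq: "card (f ` K) = card K" if "K \<subseteq> V" for K
    using that assms(1) by (simp add: card_image inj_on_subset)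
  have "{card K' | K'. K' \<subseteq> f ` V \<and> is_clique F K'} = {card K | K. K \<subseteq> V \<and> is_clique E K}"
  proof (intro set_eqI iffI)
    fix n assume "n \<in> {card K' | K'. K' \<subseteq> f ` V \<and> is_clique F K'}"
    then obtain K' where "n = card K'" "K' \<subseteq> f ` V" "is_clique F K'" by blast
    moreover obtain K where "K \<subseteq> V" "K' = f ` K"
      using \<open>K' \<subseteq> f ` V\<close> by (auto simp: subset_image_iff)
    ultimately have "n = card K" "K \<subseteq> V" "is_clique E K" using clique_iff card_eq by auto
    thus "n \<in> {card K | K. K \<subseteq> V \<and> is_clique E K}" by blast
  next
    fix n assume "n \<in> {card K | K. K \<subseteq> V \<and> is_clique E K}"
    then obtain K where "n = card K" "K \<subseteq> V" "is_clique E K" by blast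
    hence "n = card (f ` K)" "f ` K \<subseteq> f ` V" "is_clique F (f ` K)"
      using clique_iff card_eq by auto
    thus "n \<in> {card K' | K'. K' \<subseteq> f ` V \<and> is_clique F K'}" by blast
  qed
  thus ?thesis unfolding clique_number_def by simp
qed

lemma chromatic_number_image:
  assumes "inj_on f V" "\<forall>x\<in>V. \<forall>y\<in>V. F (f x) (f y) \<longleftrightarrow> E x y"
  shows "chromatic_number (f ` V) F = chromatic_number V E"
proof -
  have "(\<exists>c. proper_colouring (f ` V) F c k) \<longleftrightarrow> (\<exists>c. proper_colouring V E c k)" for k
  proof
    assume "\<exists>c. proper_colouring (f ` V) F c k"
    then obtain c where "proper_colouring (f ` V) F c k" ..
    hence "proper_colouring V E (c \<circ> f) k"
      using assms(2) unfolding proper_colouring_def by (simp add: image_subset_iff)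
    thus "\<exists>c. proper_colouring V E c k" by blast
  next
    assume "\<exists>c. proper_colouring V E c k"
    then obtain c where "proper_colouring V E c k" ..
    moreover have "\<forall>x\<in>V. the_inv_into V f (f x) = x"
      using the_inv_into_f_f[OF assms(1)] by blast
    ultimately have "proper_colouring (f ` V) F (c \<circ> the_inv_into V f) k"
      using assms(2) unfolding proper_colouring_def by (simp add: image_subset_iff)
    thus "\<exists>c. proper_colouring (f ` V) F c k" by blast
  qed
  thus ?thesis unfolding chromatic_number_def by simp
qed

lemma perfect_graph_pullback:
  assumes "inj_on f V" "\<forall>x\<in>V. \<forall>y\<in>V. F (f x) (f y) \<longleftrightarrow> E x y" "perfect_graph (f ` V) F"
  shows "perfect_graph V E"
  unfolding perfect_graph_def
proof (intro allI impI)
  fix H assume "H \<subseteq> V"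
  hence "inj_on f H" "\<forall>x\<in>H. \<forall>y\<in>H. F (f x) (f y) \<longleftrightarrow> E x y"
    using assms(1,2) inj_on_subset by blast+
  moreover have "clique_number (f ` H) F = chromatic_number (f ` H) F"
    using assms(3) \<open>H \<subseteq> V\<close> unfolding perfect_graph_def by blast
  ultimately show "clique_number H E = chromatic_number H E"
    using clique_number_image chromatic_number_image by metis
qed

section \<open>Dilworth's theorem\<close>

definition incomparable :: "'a::order \<Rightarrow> 'a \<Rightarrow> bool" where
  "incomparable x y \<longleftrightarrow> \<not> x \<le> y \<and> \<not> y \<le> x"

definition width_le :: "'a::order set \<Rightarrow> nat \<Rightarrow> bool" where
  "width_le S k \<longleftrightarrow> (\<forall>A\<subseteq>S. is_clique incomparable A \<longrightarrow> card A \<le> k)"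

lemma antichain_iff: "is_clique incomparable A \<longleftrightarrow> (\<forall>x\<in>A. \<forall>y\<in>A. x \<le> y \<longrightarrow> x = y)"
  unfolding is_clique_def incomparable_def by (metis order.antisym order.refl)

lemma chain_colouring_iff:
  "proper_colouring S incomparable c k \<longleftrightarrow>
     c ` S \<subseteq> {..<k} \<and> (\<forall>x\<in>S. \<forall>y\<in>S. c x = c y \<longrightarrow> x \<le> y \<or> y \<le> x)"
  unfolding proper_colouring_def incomparable_def by blast

lemma finite_chain_has_greatest:
  fixes A :: "'a::order set"
  assumes "finite A" "A \<noteq> {}" "\<forall>x\<in>A. \<forall>y\<in>A. x \<le> y \<or> y \<le> x"
  obtains m where "m \<in> A" "\<forall>z\<in>A. z \<le> m"
proof -
  obtain m where m: "m \<in> A" "\<forall>z\<in>A. m \<le> z \<longrightarrow> m = z"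
    using finite_has_maximal[OF assms(1,2)] by blast
  have "z \<le> m" if "z \<in> A" for z using assms(3) m that by (metis order.refl)
  thus ?thesis using that m(1) by blast
qed

text \<open>Given a chain colouring of \<open>S\<close> with \<open>k\<close> colours and an antichain of size \<open>k\<close>, every
antichain of size \<open>k\<close> is a transversal of the colour classes; \<open>t i\<close> is the greatest element
of class \<open>i\<close> occurring in such a transversal.\<close>

lemma maximum_antichains_below_tops:
  fixes S :: "'a::order set"
  assumes "finite S" "proper_colouring S incomparable c k"
    and "A0 \<subseteq> S" "is_clique incomparable A0" "card A0 = k"
  obtains t where "\<forall>i<k. t i \<in> S \<and> c (t i) = i"
    and "\<forall>i<k. \<forall>j<k. t i \<le> t j \<longrightarrow> i = j"
    and "\<forall>B\<subseteq>S. is_clique incomparable B \<and> card B = k \<longrightarrow> (\<forall>i<k. \<exists>y\<in>B. c y = i \<and> y \<le> t i)"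
proof -
  define M where "M = {B. B \<subseteq> S \<and> is_clique incomparable B \<and> card B = k}"
  define X where "X i = {y \<in> S. c y = i \<and> y \<in> \<Union>M}" for i
  have meets: "\<exists>y\<in>B. c y = i" if "B \<in> M" "i < k" for B i
  proof -
    have "B \<subseteq> S" "is_clique incomparable B" "card B = k" using \<open>B \<in> M\<close> unfolding M_def by auto
    thus ?thesis using clique_meets_every_colour[OF _ _ assms(2) _ \<open>i < k\<close>] by blast
  qed
  have "\<exists>m. m \<in> X i \<and> (\<forall>z\<in>X i. z \<le> m)" if "i < k" for i
  proof -
    have "A0 \<in> M" using assms(3-5) unfolding M_def by blast
    then obtain y where "y \<in> A0" "c y = i" using meets \<open>i < k\<close> by blast
    hence "y \<in> X i" using \<open>A0 \<in> M\<close> assms(3) unfolding X_def by blast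
    moreover have "finite (X i)" using assms(1) unfolding X_def by simp
    moreover have "\<forall>x\<in>X i. \<forall>y\<in>X i. x \<le> y \<or> y \<le> x"
      using assms(2) unfolding chain_colouring_iff X_def by auto
    ultimately obtain m where "m \<in> X i" "\<forall>z\<in>X i. z \<le> m"
      using finite_chain_has_greatest[of "X i"] by blast
    thus ?thesis by blast
  qed
  then obtain t where t: "\<And>i. i < k \<Longrightarrow> t i \<in> X i \<and> (\<forall>z\<in>X i. z \<le> t i)"
    by metis
  have below: "\<exists>y\<in>B. c y = i \<and> y \<le> t i" if "B \<in> M" "i < k" for B i
  proof -
    obtain y where "y \<in> B" "c y = i" using meets[OF \<open>B \<in> M\<close> \<open>i < k\<close>] by blast
    moreover have "y \<in> X i" using calculation \<open>B \<in> M\<close> unfolding M_def X_def by blast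
    ultimately show ?thesis using t \<open>i < k\<close> by blast
  qed
  have "i = j" if "i < k" "j < k" "t i \<le> t j" for i j
  proof -
    obtain B where "B \<in> M" "t j \<in> B" using t[OF \<open>j < k\<close>] unfolding X_def by blast
    then obtain y where "y \<in> B" "c y = i" "y \<le> t j"
      using below[OF _ \<open>i < k\<close>] \<open>t i \<le> t j\<close> order_trans by blast
    hence "y = t j" using \<open>B \<in> M\<close> \<open>t j \<in> B\<close> unfolding M_def antichain_iff by blast
    thus ?thesis using \<open>c y = i\<close> t[OF \<open>j < k\<close>] unfolding X_def by simp
  qed
  moreover have "t i \<in> S \<and> c (t i) = i" if "i < k" for i using t[OF that] unfolding X_def by blast
  ultimately show ?thesis using that below unfolding M_def by blast
qed

text \<open>The inductive step of Galvin's proof: if removing a maximal element \<open>a\<close> does not lower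
the width \<open>k\<close>, a chain through \<open>a\<close> can be removed that does.\<close>

lemma chain_lowering_width:
  fixes S :: "'a::order set"
  assumes "finite S" "a \<in> S" "\<forall>y\<in>S. a \<le> y \<longrightarrow> y = a" "width_le S k"
    and "\<not> width_le (S - {a}) (k - 1)" "proper_colouring (S - {a}) incomparable c k"
  obtains K where "a \<in> K" "K \<subseteq> S" "\<forall>p\<in>K. \<forall>q\<in>K. p \<le> q \<or> q \<le> p" "width_le (S - K) (k - 1)"
proof -
  let ?S' = "S - {a}"
  obtain A0 where "A0 \<subseteq> ?S'" "is_clique incomparable A0" "\<not> card A0 \<le> k - 1"
    using assms(5) unfolding width_le_def by blast
  moreover have "card A0 \<le> k" using calculation assms(4) unfolding width_le_def by blast
  ultimately have "A0 \<subseteq> ?S'" "is_clique incomparable A0" "card A0 = k" by simp_all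
  then obtain t where t_in: "\<forall>i<k. t i \<in> ?S' \<and> c (t i) = i"
    and t_anti: "\<forall>i<k. \<forall>j<k. t i \<le> t j \<longrightarrow> i = j"
    and t_above: "\<forall>B\<subseteq>?S'. is_clique incomparable B \<and> card B = k \<longrightarrow> (\<forall>i<k. \<exists>y\<in>B. c y = i \<and> y \<le> t i)"
    using maximum_antichains_below_tops[OF _ assms(6)] assms(1) by blast
  have "\<exists>i<k. t i \<le> a"
  proof (rule ccontr)
    assume none: "\<not> (\<exists>i<k. t i \<le> a)"
    define A where "A = insert a (t ` {..<k})"
    have "inj_on t {..<k}" using t_anti by (auto intro: inj_onI order.refl)
    moreover have "a \<notin> t ` {..<k}" using t_in by auto
    ultimately have "card A = Suc k" unfolding A_def by (simp add: card_image)
    moreover have "A \<subseteq> S" "is_clique incomparable A"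
      using t_in t_anti none assms(2,3) unfolding A_def antichain_iff by auto
    moreover have "card A \<le> k" using calculation(2,3) assms(4) unfolding width_le_def by blast
    ultimately show False by simp
  qed
  then obtain i where "i < k" "t i \<le> a" by blast
  define K where "K = insert a {z \<in> ?S'. c z = i \<and> z \<le> t i}"
  have "a \<in> K" "K \<subseteq> S" using assms(2) unfolding K_def by auto
  moreover have "\<forall>z\<in>K. z \<le> a" using \<open>t i \<le> a\<close> unfolding K_def by (auto intro: order_trans)
  moreover have "\<forall>p\<in>K - {a}. \<forall>q\<in>K - {a}. p \<le> q \<or> q \<le> p"
    using assms(6) unfolding K_def chain_colouring_iff by auto
  ultimately have "\<forall>p\<in>K. \<forall>q\<in>K. p \<le> q \<or> q \<le> p" by blast
  moreover have "width_le (S - K) (k - 1)"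
    unfolding width_le_def
  proof (intro allI impI; rule ccontr)
    fix B assume "B \<subseteq> S - K" "is_clique incomparable B" "\<not> card B \<le> k - 1"
    moreover have "card B \<le> k" using calculation assms(4) unfolding width_le_def by blast
    ultimately have "card B = k" by linarith
    moreover have "B \<subseteq> ?S'" using \<open>B \<subseteq> S - K\<close> unfolding K_def by blast
    ultimately obtain y where "y \<in> B" "c y = i" "y \<le> t i"
      using t_above \<open>i < k\<close> \<open>is_clique incomparable B\<close> by blast
    thus False using \<open>B \<subseteq> S - K\<close> unfolding K_def by blast
  qed
  ultimately show ?thesis using that \<open>a \<in> K\<close> \<open>K \<subseteq> S\<close> by blast
qed

theorem dilworth:
  fixes S :: "'a::order set"
  assumes "finite S" "width_le S k"
  shows "\<exists>c. proper_colouring S incomparable c k"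
  using assms
proof (induction "card S" arbitrary: S k rule: less_induct)
  case less
  show ?case
  proof (cases "S = {}")
    case True
    thus ?thesis unfolding proper_colouring_def by simp
  next
    case False
    obtain a where "a \<in> S" and a_max: "\<forall>y\<in>S. a \<le> y \<longrightarrow> y = a"
      using finite_has_maximal[OF less.prems(1) False] by metis
    have "is_clique incomparable {a}" unfolding is_clique_def by simp
    hence "card {a} \<le> k" using less.prems(2) \<open>a \<in> S\<close> unfolding width_le_def by blast
    hence "1 \<le> k" by simp
    have "\<exists>K. a \<in> K \<and> K \<subseteq> S \<and> (\<forall>p\<in>K. \<forall>q\<in>K. p \<le> q \<or> q \<le> p) \<and> width_le (S - K) (k - 1)"
    proof (cases "width_le (S - {a}) (k - 1)")
      case True
      thus ?thesis using \<open>a \<in> S\<close> by blast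
    next
      case False
      have "width_le (S - {a}) k" using less.prems(2) unfolding width_le_def by blast
      then obtain c where c: "proper_colouring (S - {a}) incomparable c k"
        using less.hyps[OF card_Diff1_less finite_Diff] less.prems(1) \<open>a \<in> S\<close> by blast
      obtain K where "a \<in> K" "K \<subseteq> S" "\<forall>p\<in>K. \<forall>q\<in>K. p \<le> q \<or> q \<le> p" "width_le (S - K) (k - 1)"
        using chain_lowering_width[OF less.prems(1) \<open>a \<in> S\<close> a_max less.prems(2) False c] .
      thus ?thesis by blast
    qed
    then obtain K where "a \<in> K" "K \<subseteq> S" and K_chain: "\<forall>p\<in>K. \<forall>q\<in>K. p \<le> q \<or> q \<le> p"
      and "width_le (S - K) (k - 1)" by blast
    have "S - K \<subset> S" using \<open>a \<in> K\<close> \<open>a \<in> S\<close> by blast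
    hence "card (S - K) < card S" by (rule psubset_card_mono[OF less.prems(1)])
    then obtain c where "proper_colouring (S - K) incomparable c (k - 1)"
      using less.hyps finite_Diff[OF less.prems(1)] \<open>width_le (S - K) (k - 1)\<close> by blast
    from proper_colouring_extend_independent[OF this, of K]
    have "proper_colouring ((S - K) \<union> K) incomparable (\<lambda>z. if z \<in> K then k - 1 else c z) k"
      using K_chain \<open>1 \<le> k\<close> unfolding incomparable_def by simp
    moreover have "(S - K) \<union> K = S" using \<open>K \<subseteq> S\<close> by blast
    ultimately show ?thesis by auto
  qed
qed

corollary incomparability_graph_perfect:
  fixes V :: "'a::order set"
  assumes "finite V"
  shows "perfect_graph V incomparable"
  unfolding perfect_graph_def
proof (intro allI impI)
  fix H assume "H \<subseteq> V"
  hence "finite H" using assms finite_subset by blast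
  moreover have "width_le H (clique_number H incomparable)"
    using clique_number_ge[OF \<open>finite H\<close>] unfolding width_le_def by blast
  ultimately show "clique_number H incomparable = chromatic_number H incomparable"
    using dilworth chromatic_number_eq_clique_number by metis
qed

section \<open>The cozero-divisor graph of \<open>Z\<^sub>2\<^sup>n\<close>\<close>

definition supp :: "('n \<Rightarrow> bit) \<Rightarrow> 'n set" where
  "supp a = {i. a i = 1}"

lemma inj_supp: "inj supp"
proof (rule injI)
  fix a b :: "'n \<Rightarrow> bit"
  assume "supp a = supp b"
  hence "a i = 1 \<longleftrightarrow> b i = 1" for i unfolding supp_def by blast
  thus "a = b" by (metis bit_not_one_iff ext)
qed

lemma principal_ideal_iff_supp_subset:
  "(a :: 'n \<Rightarrow> bit) \<in> principal_ideal b \<longleftrightarrow> supp a \<subseteq> supp b"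
proof
  assume "a \<in> principal_ideal b"
  then obtain r where "a = r * b" unfolding principal_ideal_def by blast
  have "b i = 1" if "a i = 1" for i
    using that \<open>a = r * b\<close> by (cases "b i") auto
  thus "supp a \<subseteq> supp b" unfolding supp_def by blast
next
  assume "supp a \<subseteq> supp b"
  have "a i = a i * b i" for i
    using \<open>supp a \<subseteq> supp b\<close> unfolding supp_def by (cases "a i") auto
  hence "a = a * b" by (simp add: fun_eq_iff)
  thus "a \<in> principal_ideal b" unfolding principal_ideal_def by blast
qed

lemma cozero_adj_iff_incomparable_supp:
  assumes "(x :: 'n \<Rightarrow> bit) \<in> W_star" "y \<in> W_star"
  shows "cozero_adj x y \<longleftrightarrow> incomparable (supp x) (supp y)"
  using assms unfolding cozero_adj_def incomparable_def principal_ideal_iff_supp_subset by blast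

theorem theorem3p2:
  shows "perfect_graph (W_star :: ('n::finite \<Rightarrow> bit) set) cozero_adj"
proof (rule perfect_graph_pullback)
  show "inj_on supp (W_star :: ('n \<Rightarrow> bit) set)" using inj_supp by (rule inj_on_subset) simp
  show "\<forall>x\<in>W_star. \<forall>y\<in>W_star. incomparable (supp x) (supp y) \<longleftrightarrow> cozero_adj x y"
    using cozero_adj_iff_incomparable_supp by blast
  show "perfect_graph (supp ` (W_star :: ('n \<Rightarrow> bit) set)) incomparable"
    by (rule incomparability_graph_perfect) simp
qed

end
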